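(* Let $K$ be a field with a non-archimedean absolute value $v$, let $\mathbb{C}_v$ be the completion of an algebraic closure of $K$, and let $\phi(z)\in K[z]$ be a polynomial of degree $d\geq 2$ with lead coefficient $a_d$. Let $\mathfrak{K}_v\subseteq\mathbb{C}_v$ be the filled Julia set of $\phi$ at $v$, let $r_v=\sup\{|x-y|_v : x,y\in\mathfrak{K}_v\}$ be its diameter, and let $U_0\subseteq\mathbb{C}_v$ be the intersection of all disks containing $\mathfrak{K}_v$. Then: (1) $U_0=\bar{D}(x,r_v)$ for any $x\in\mathfrak{K}_v$; (2) there exists $x\in\mathbb{C}_v$ such that $|x|_v=r_v$; (3) $r_v\geq|a_d|_v^{-1/(d-1)}$, with equality if and only if $\mathfrak{K}_v=U_0$; (4) if $r_v>|a_d|_v^{-1/(d-1)}$, let $\alpha\in U_0$ and let $\beta_1,\ldots,\beta_d\in\mathbb{C}_v$ be the roots of $\phi(z)=\alpha$; then $\mathfrak{K}_v\subseteq U_1$, where $U_1=\bigcup_{i=1}^d\bar{D}(\beta_i,|a_d|_v^{-1/(d-1)})$.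
   Context: The filled Julia set of $\phi$ at $v$ is $\mathfrak{K}_v=\{x\in\mathbb{C}_v : \{|\phi^n(x)|_v:n\geq 0\}\text{ is bounded}\}$, where $\phi^n$ is the $n$-th iterate of $\phi$. For $x\in\mathbb{C}_v$ and $r>0$, $\bar{D}(x,r)=\{y\in\mathbb{C}_v:|y-x|_v\leq r\}$ is the closed disk. *)

theory Defs
  imports Complex_Main "HOL-Computational_Algebra.Polynomial"
begin

definition nonarch_abs :: "('a::field \<Rightarrow> real) \<Rightarrow> bool" where
  "nonarch_abs av \<longleftrightarrow>
     (\<forall>x. av x \<ge> 0) \<and> (\<forall>x. av x = 0 \<longleftrightarrow> x = 0) \<and>
     (\<forall>x y. av (x * y) = av x * av y) \<and>
     (\<forall>x y. av (x + y) \<le> max (av x) (av y))"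

definition alg_closed_field :: "'a::field itself \<Rightarrow> bool" where
  "alg_closed_field _ \<longleftrightarrow> (\<forall>p::'a poly. degree p \<ge> 1 \<longrightarrow> (\<exists>x. poly p x = 0))"

definition av_complete :: "('a::field \<Rightarrow> real) \<Rightarrow> bool" where
  "av_complete av \<longleftrightarrow>
     (\<forall>X::nat \<Rightarrow> 'a. (\<forall>e>0. \<exists>N. \<forall>m\<ge>N. \<forall>n\<ge>N. av (X m - X n) < e) \<longrightarrow>
        (\<exists>L. \<forall>e>0. \<exists>N. \<forall>n\<ge>N. av (X n - L) < e))"

definition is_subfield :: "'a::field set \<Rightarrow> bool" where
  "is_subfield K \<longleftrightarrow> 0 \<in> K \<and> 1 \<in> K \<and>
     (\<forall>x\<in>K. \<forall>y\<in>K. x + y \<in> K \<and> x * y \<in> K) \<and>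
     (\<forall>x\<in>K. - x \<in> K \<and> inverse x \<in> K)"

definition algebraic_over :: "'a::field set \<Rightarrow> 'a set" where
  "algebraic_over K = {x. \<exists>p. p \<noteq> 0 \<and> (\<forall>i. coeff p i \<in> K) \<and> poly p x = 0}"

text \<open>The ambient field (with absolute value av) is C_v: complete, algebraically closed,
  and containing the algebraic closure of K as a dense subset, i.e. the completion of
  an algebraic closure of K; av restricted to K is v.\<close>
definition is_Cv :: "'a::field set \<Rightarrow> ('a \<Rightarrow> real) \<Rightarrow> bool" where
  "is_Cv K av \<longleftrightarrow> is_subfield K \<and> nonarch_abs av \<and> alg_closed_field TYPE('a) \<and>
     av_complete av \<and>
     (\<forall>y. \<forall>e>0. \<exists>x\<in>algebraic_over K. av (y - x) < e)"

definition cdisk :: "('a::field \<Rightarrow> real) \<Rightarrow> 'a \<Rightarrow> real \<Rightarrow> 'a set" where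
  "cdisk av x r = {y. av (y - x) \<le> r}"

definition filled_julia :: "('a::field \<Rightarrow> real) \<Rightarrow> 'a poly \<Rightarrow> 'a set" where
  "filled_julia av \<phi> = {x. bdd_above (range (\<lambda>n. av ((poly \<phi> ^^ n) x)))}"

definition julia_diam :: "('a::field \<Rightarrow> real) \<Rightarrow> 'a poly \<Rightarrow> real" where
  "julia_diam av \<phi> = Sup {av (x - y) | x y. x \<in> filled_julia av \<phi> \<and> y \<in> filled_julia av \<phi>}"

definition U0 :: "('a::field \<Rightarrow> real) \<Rightarrow> 'a poly \<Rightarrow> 'a set" where
  "U0 av \<phi> = \<Inter> {cdisk av c r | c r. r > 0 \<and> filled_julia av \<phi> \<subseteq> cdisk av c r}"

end

theory Submission
  imports Defs
begin

text \<open>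
  Put \<rho> = |a_d|^(-1/(d-1)), so that |a_d| t^d > t exactly when t > \<rho>. For x0 in the filled
  Julia set J write \<phi>(z) - x0 = a_d \<Prod>(z - \<gamma>_i); the \<gamma>_i lie in J, so by the ultrametric
  inequality |\<phi>(z) - x0| = |a_d| |z - x0|^d as soon as |z - x0| exceeds the diameter r of J.
  Hence far points escape, J is bounded, and every disk containing J contains D(x0, r) = U0.
  If r \<le> \<rho>, then \<phi> maps D(x0, \<rho>) into itself, so this disk lies in J; thus r \<ge> \<rho>, and
  r = \<rho> gives J = U0. If r > \<rho>, solving \<Prod>(z - \<gamma>_i) = (y - y')^d for y, y' in J almost r
  apart gives z \<in> U0 with \<phi>(z) \<notin> U0, so J \<noteq> U0. Moreover each point of J lies within \<rho>
  of a root \<beta>_i of \<phi> = \<alpha>, since otherwise J would fit in a disk of radius less than r. So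
  distances above \<rho> in J are distances between the finitely many \<beta>_i, and r is attained.
\<close>

locale nonarch_abs_value =
  fixes av :: "'a::field \<Rightarrow> real"
  assumes nonarch_abs: "nonarch_abs av"
begin

lemma av_nonneg [simp]: "av x \<ge> 0"
  using nonarch_abs unfolding nonarch_abs_def by blast

lemma av_eq_0_iff [simp]: "av x = 0 \<longleftrightarrow> x = 0"
  using nonarch_abs unfolding nonarch_abs_def by blast

lemma av_zero [simp]: "av 0 = 0"
  by simp

lemma av_pos: "x \<noteq> 0 \<Longrightarrow> av x > 0"
  using av_nonneg[of x] av_eq_0_iff[of x] by linarith

lemma av_mult: "av (x * y) = av x * av y"
  using nonarch_abs unfolding nonarch_abs_def by blast

lemma av_add_le_max: "av (x + y) \<le> max (av x) (av y)"
  using nonarch_abs unfolding nonarch_abs_def by blast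

lemma av_one [simp]: "av 1 = 1"
  using av_mult[of 1 1] by simp

lemma av_minus [simp]: "av (- x) = av x"
proof -
  have "av (-1) ^ 2 = 1"
    using av_mult[of "-1" "-1"] by (simp add: power2_eq_square)
  then have "av (-1) = 1"
    using av_nonneg[of "-1"] by (auto simp: power2_eq_1_iff)
  then show ?thesis
    using av_mult[of "-1" x] by simp
qed

lemma av_diff_commute: "av (x - y) = av (y - x)"
  using av_minus[of "x - y"] by simp

lemma av_diff_le_max: "av (x - y) \<le> max (av x) (av y)"
  using av_add_le_max[of x "- y"] by simp

lemma av_diff_triangle: "av (x - z) \<le> max (av (x - y)) (av (y - z))"
  using av_add_le_max[of "x - y" "y - z"] by simp

lemma av_le_diff_plus: "av x \<le> av (x - y) + av y"
proof -
  have "av x \<le> max (av (x - y)) (av y)"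
    using av_add_le_max[of "x - y" y] by simp
  then show ?thesis
    using av_nonneg[of y] av_nonneg[of "x - y"] by linarith
qed

lemma av_power: "av (x ^ n) = av x ^ n"
  by (induction n) (simp_all add: av_mult)

lemma av_prod: "av (\<Prod>i\<in>A. g i) = (\<Prod>i\<in>A. av (g i))"
  by (induction A rule: infinite_finite_induct) (simp_all add: av_mult)

lemma av_inverse: "av (inverse x) = inverse (av x)"
proof (cases "x = 0")
  case False
  then have "av x * av (inverse x) = 1"
    using av_mult[of x "inverse x"] by simp
  then show ?thesis by (rule inverse_unique[symmetric])
qed simp

lemma av_add_eq_of_less: "av y < av x \<Longrightarrow> av (x + y) = av x"
  using av_add_le_max[of x y] av_add_le_max[of "x + y" "- y"] by simp

lemma av_diff_eq_of_less: "av (y - c) < av (x - c) \<Longrightarrow> av (x - y) = av (x - c)"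
  using av_add_eq_of_less[of "c - y" "x - c"] av_diff_commute[of c y] by simp

lemma av_prod_diff_eq_of_less:
  assumes "\<And>i. i \<in> A \<Longrightarrow> av (\<gamma> i - c) < av (z - c)"
  shows "av (\<Prod>i\<in>A. z - \<gamma> i) = av (z - c) ^ card A"
proof -
  have "av (\<Prod>i\<in>A. z - \<gamma> i) = (\<Prod>i\<in>A. av (z - c))"
    unfolding av_prod using assms by (intro prod.cong) (auto intro: av_diff_eq_of_less)
  then show ?thesis by simp
qed

lemma av_diff_eq_of_close:
  assumes "av (u - v) > s" "av (u - p) \<le> s" "av (v - q) \<le> s"
  shows "av (p - q) = av (u - v)"
proof -
  have "av (p - u) < av (u - v)"
    using assms av_diff_commute[of u p] by simp
  then have pv: "av (p - v) = av (u - v)"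
    using av_add_eq_of_less[of "p - u" "u - v"] by (simp add: algebra_simps)
  have "av (v - q) < av (p - v)"
    using assms pv by simp
  then show ?thesis
    using pv av_add_eq_of_less[of "v - q" "p - v"] by simp
qed

lemma cdisk_diff_le: "x \<in> cdisk av c s \<Longrightarrow> y \<in> cdisk av c s \<Longrightarrow> av (x - y) \<le> s"
  using av_diff_triangle[of x y c] av_diff_commute[of y c] unfolding cdisk_def by simp

end

lemma alg_closed_poly_splits:
  fixes p :: "'a::field poly"
  assumes alg_closed: "alg_closed_field TYPE('a)"
  shows "\<exists>\<beta>. p = smult (lead_coeff p) (\<Prod>i<degree p. [:-\<beta> i, 1:])"
proof (induction "degree p" arbitrary: p)
  case 0
  then obtain c where "p = [:c:]" by (metis degree_eq_zeroE)
  then show ?case using 0 by simp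
next
  case (Suc n)
  then obtain x where "poly p x = 0"
    using alg_closed unfolding alg_closed_field_def by fastforce
  then obtain q where pq: "p = [:-x, 1:] * q" by (meson dvdE poly_eq_0_iff_dvd)
  then have "q \<noteq> 0" using Suc by (metis mult_zero_right degree_0 nat.distinct(1))
  then have "degree p = Suc (degree q)"
    unfolding pq by (subst degree_mult_eq) auto
  then have dq: "degree q = n" using Suc(2) by simp
  have lq: "lead_coeff q = lead_coeff p" unfolding pq lead_coeff_mult by simp
  obtain \<beta> where "q = smult (lead_coeff q) (\<Prod>i<degree q. [:-\<beta> i, 1:])"
    using Suc(1)[of q] dq by auto
  moreover have "(\<Prod>i<Suc n. [:-(\<beta>(n := x)) i, 1:]) = (\<Prod>i<n. [:-\<beta> i, 1:]) * [:-x, 1:]"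
    by simp
  ultimately have "p = smult (lead_coeff p) (\<Prod>i<Suc n. [:-(\<beta>(n := x)) i, 1:])"
    using pq dq lq by (metis mult.commute mult_smult_right)
  then show ?case using Suc(2) by metis
qed

lemma alg_closed_prod_linear_eq:
  fixes \<gamma> :: "nat \<Rightarrow> 'a::field"
  assumes alg_closed: "alg_closed_field TYPE('a)" and n: "n \<ge> 1"
  shows "\<exists>z. (\<Prod>i<n. z - \<gamma> i) = e"
proof -
  let ?P = "(\<Prod>i<n. [:-\<gamma> i, 1:]) + [:-e:]"
  have "degree (\<Prod>i<n. [:-\<gamma> i, 1:]) = n"
    by (subst degree_prod_eq_sum_degree) auto
  then have "degree ?P = n" using n by (simp add: degree_add_eq_left)
  then have "\<exists>z. poly ?P z = 0"
    using alg_closed n unfolding alg_closed_field_def by metis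
  then show ?thesis
    by (simp add: poly_prod)
qed

lemma (in nonarch_abs_value) exists_av_eq_root:
  assumes alg_closed: "alg_closed_field TYPE('a)" and n: "1 \<le> n" and s: "0 \<le> s"
    and root: "s ^ n = av b"
  shows "\<exists>c. av c = s"
proof -
  obtain z where "(\<Prod>i<n. z - (0::'a)) = b"
    using alg_closed_prod_linear_eq[OF alg_closed n, of "\<lambda>_. 0" b] by blast
  then have "av (z ^ n) = av b"
    by simp
  then have "av z ^ n = s ^ n"
    unfolding av_power root .
  then have "av z = s"
    using n s by (subst (asm) power_eq_iff_eq_base) auto
  then show ?thesis by blast
qed

lemma bdd_above_range_Suc_iff:
  fixes g :: "nat \<Rightarrow> 'a::lattice"
  shows "bdd_above (range (\<lambda>n. g (Suc n))) \<longleftrightarrow> bdd_above (range g)"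
proof -
  have "range g = insert (g 0) (range (\<lambda>n. g (Suc n)))"
  proof (intro equalityI subsetI)
    fix y assume "y \<in> range g"
    then obtain n where "y = g n" by blast
    then show "y \<in> insert (g 0) (range (\<lambda>n. g (Suc n)))" by (cases n) auto
  qed auto
  then show ?thesis by simp
qed

lemma prod_gt_factor_mult_power:
  fixes x :: "nat \<Rightarrow> real"
  assumes j: "j < n" and n: "2 \<le> n" and c: "0 \<le> c" and gt: "\<And>i. i < n \<Longrightarrow> c < x i"
  shows "x j * c ^ (n - 1) < (\<Prod>i<n. x i)"
proof -
  define A where "A = {..<n} - {j}"
  have k: "(if j = 0 then 1 else 0) \<in> A"
    using j n unfolding A_def by auto
  have "c ^ (n - 1) = (\<Prod>i\<in>A. c)" using j unfolding A_def by simp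
  also have "\<dots> < (\<Prod>i\<in>A. x i)"
    using k gt c unfolding A_def by (intro prod_mono_strict) (auto intro: less_imp_le le_less_trans)
  finally have "x j * c ^ (n - 1) < x j * (\<Prod>i\<in>A. x i)"
    using gt[OF j] c by simp
  also have "\<dots> = (\<Prod>i<n. x i)"
    unfolding A_def using j by (intro prod.remove[symmetric]) auto
  finally show ?thesis .
qed

lemma iterate_expanding_lower_bound:
  fixes g :: "'b \<Rightarrow> 'b" and h :: "'b \<Rightarrow> real"
  assumes expand: "\<And>w. T \<le> h w \<Longrightarrow> L * h w \<le> h (g w)"
    and L: "1 \<le> L" and T: "0 \<le> T" and z: "T \<le> h z"
  shows "L ^ n * h z \<le> h ((g ^^ n) z)"
proof (induction n)
  case (Suc n)
  have "h z \<le> L ^ n * h z"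
    using L T z by (simp add: mult_le_cancel_right1)
  then have "L * (L ^ n * h z) \<le> L * h ((g ^^ n) z)"
    using Suc L by simp
  also have "\<dots> \<le> h ((g ^^ Suc n) z)"
    using expand Suc z \<open>h z \<le> L ^ n * h z\<close> by simp
  finally show ?case by simp
qed simp

locale nonarch_poly_dynamics = nonarch_abs_value av for av :: "'a::field \<Rightarrow> real" +
  fixes \<phi> :: "'a poly" and d :: nat
  assumes alg_closed: "alg_closed_field TYPE('a)"
    and degree_phi: "degree \<phi> = d" and two_le_d: "2 \<le> d"
begin

abbreviation f :: "'a \<Rightarrow> 'a" where "f \<equiv> poly \<phi>"
abbreviation a :: 'a where "a \<equiv> lead_coeff \<phi>"
abbreviation J :: "'a set" where "J \<equiv> filled_julia av \<phi>"
abbreviation r :: real where "r \<equiv> julia_diam av \<phi>"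

definition \<rho> :: real where "\<rho> = av a powr (-1 / (real d - 1))"

lemma phi_nonzero [simp]: "\<phi> \<noteq> 0"
  using degree_phi two_le_d by auto

lemma av_lead_coeff_pos: "av a > 0"
  by (simp add: av_pos)

lemma degree_phi_diff: "degree q < d \<Longrightarrow> degree (\<phi> - q) = d"
  using degree_add_eq_left[of "- q" \<phi>] degree_phi by simp

lemma rho_pos: "\<rho> > 0"
  unfolding \<rho>_def using av_lead_coeff_pos by simp

lemma av_lead_coeff_mult_rho_power: "av a * \<rho> ^ (d - 1) = 1"
proof -
  have "\<rho> ^ (d - 1) = av a powr (-1 / (real d - 1) * real (d - 1))"
    unfolding \<rho>_def powr_powr[symmetric] using av_lead_coeff_pos by (simp add: powr_realpow)
  also have "-1 / (real d - 1) * real (d - 1) = -1"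
    using two_le_d by (simp add: of_nat_diff)
  finally show ?thesis
    using av_lead_coeff_pos by (simp add: powr_neg_one)
qed

lemma av_lead_coeff_mult_power_eq: "av a * t ^ d = t * (av a * t ^ (d - 1))"
  using two_le_d by (cases d) simp_all

lemma av_lead_coeff_mult_rho_power_d: "av a * \<rho> ^ d = \<rho>"
  using av_lead_coeff_mult_power_eq[of \<rho>] av_lead_coeff_mult_rho_power by simp

lemma av_lead_coeff_mult_power_gt_one:
  assumes "\<rho> < t"
  shows "1 < av a * t ^ (d - 1)"
proof -
  have "\<rho> ^ (d - 1) < t ^ (d - 1)"
    using assms rho_pos two_le_d by (intro power_strict_mono) auto
  then show ?thesis
    using av_lead_coeff_mult_rho_power av_lead_coeff_pos by (metis mult_strict_left_mono)
qed

lemma exists_av_eq_rho: "\<exists>c. av c = \<rho>"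
proof (rule exists_av_eq_root[OF alg_closed])
  show "\<rho> ^ (d - 1) = av (inverse a)"
    unfolding av_inverse using inverse_unique[OF av_lead_coeff_mult_rho_power] by simp
qed (use two_le_d rho_pos in auto)

definition lists_preimages :: "'a \<Rightarrow> (nat \<Rightarrow> 'a) \<Rightarrow> bool" where
  "lists_preimages w \<gamma> \<longleftrightarrow> (\<forall>z. f z - w = a * (\<Prod>i<d. z - \<gamma> i))"

lemma lists_preimagesI:
  assumes "\<phi> - [:w:] = smult a (\<Prod>i<d. [:-\<gamma> i, 1:])"
  shows "lists_preimages w \<gamma>"
  unfolding lists_preimages_def
proof
  fix z
  have "poly (\<phi> - [:w:]) z = a * (\<Prod>i<d. z - \<gamma> i)"
    unfolding assms by (simp add: poly_prod)
  then show "f z - w = a * (\<Prod>i<d. z - \<gamma> i)"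
    by simp
qed

lemma exists_lists_preimages: "\<exists>\<gamma>. lists_preimages w \<gamma>"
proof -
  have dp: "degree (\<phi> - [:w:]) = d"
    using two_le_d by (intro degree_phi_diff) simp
  then have "lead_coeff (\<phi> - [:w:]) = a"
    using degree_phi two_le_d by (simp add: coeff_eq_0)
  then show ?thesis
    using alg_closed_poly_splits[OF alg_closed, of "\<phi> - [:w:]"] dp lists_preimagesI by metis
qed

lemma lists_preimages_image:
  assumes "lists_preimages w \<gamma>" and "i < d"
  shows "f (\<gamma> i) = w"
proof -
  have "(\<Prod>j<d. \<gamma> i - \<gamma> j) = 0"
    using \<open>i < d\<close> by (intro prod_zero) auto
  then show ?thesis
    using assms(1) unfolding lists_preimages_def by (metis mult_zero_right right_minus_eq)
qed

lemma av_image_diff: "lists_preimages w \<gamma> \<Longrightarrow> av (f z - w) = av a * av (\<Prod>i<d. z - \<gamma> i)"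
  unfolding lists_preimages_def by (simp add: av_mult)

lemma filled_julia_iff_orbit_bounded:
  "x \<in> J \<longleftrightarrow> (\<exists>B. \<forall>n. av ((f ^^ n) x - c) \<le> B)"
proof
  assume "x \<in> J"
  then obtain B where "\<forall>n. av ((f ^^ n) x) \<le> B"
    unfolding filled_julia_def bdd_above_def by auto
  then have "\<forall>n. av ((f ^^ n) x - c) \<le> B + av c"
    using av_diff_le_max[of "(f ^^ _) x" c] by (smt (verit) av_nonneg)
  then show "\<exists>B. \<forall>n. av ((f ^^ n) x - c) \<le> B" ..
next
  assume "\<exists>B. \<forall>n. av ((f ^^ n) x - c) \<le> B"
  then obtain B where "\<forall>n. av ((f ^^ n) x - c) \<le> B" ..
  then have "\<forall>n. av ((f ^^ n) x) \<le> B + av c"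
    using av_le_diff_plus[of "(f ^^ _) x" c] by (meson add_right_mono order_trans)
  then show "x \<in> J"
    unfolding filled_julia_def bdd_above_def by auto
qed

lemma filled_julia_image_iff: "f x \<in> J \<longleftrightarrow> x \<in> J"
proof -
  have "(f ^^ n) (f x) = (f ^^ Suc n) x" for n
    by (simp add: funpow_Suc_right del: funpow.simps)
  then show ?thesis
    unfolding filled_julia_def mem_Collect_eq
    using bdd_above_range_Suc_iff[of "\<lambda>n. av ((f ^^ n) x)"] by simp
qed

lemma preimage_in_filled_julia: "w \<in> J \<Longrightarrow> lists_preimages w \<gamma> \<Longrightarrow> i < d \<Longrightarrow> \<gamma> i \<in> J"
  using filled_julia_image_iff lists_preimages_image by metis

lemma filled_julia_nonempty: "\<exists>x. x \<in> J"
proof -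
  have "1 \<le> degree (\<phi> - [:0, 1:])"
    using two_le_d by (subst degree_phi_diff) auto
  then obtain z where "poly (\<phi> - [:0, 1:]) z = 0"
    using alg_closed unfolding alg_closed_field_def by blast
  then have "f z = z"
    by simp
  then have "(f ^^ n) z = z" for n
    by (induction n) simp_all
  then have "z \<in> J"
    using filled_julia_iff_orbit_bounded[of z z] by auto
  then show ?thesis ..
qed

text \<open>Outside a disk containing all preimages of \<open>x\<^sub>0\<close> and of radius beyond \<open>\<rho>\<close>,
  \<open>f\<close> expands distances to \<open>x\<^sub>0\<close> by a fixed factor \<open>> 1\<close>.\<close>
lemma filled_julia_bounded: "x0 \<in> J \<Longrightarrow> \<exists>T. \<forall>z\<in>J. av (z - x0) < T"
proof -
  obtain \<gamma> where \<gamma>: "lists_preimages x0 \<gamma>"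
    using exists_lists_preimages by blast
  define T where "T = \<rho> + (\<Sum>i<d. av (\<gamma> i - x0)) + 1"
  have "0 \<le> (\<Sum>i<d. av (\<gamma> i - x0))"
    by (simp add: sum_nonneg)
  then have \<rho>T: "\<rho> < T"
    unfolding T_def by simp
  then have T: "0 < T"
    using rho_pos by simp
  have \<gamma>T: "av (\<gamma> i - x0) < T" if "i < d" for i
    using member_le_sum[of i "{..<d}" "\<lambda>i. av (\<gamma> i - x0)"] that rho_pos unfolding T_def by simp
  define L where "L = av a * T ^ (d - 1)"
  have L: "1 < L"
    unfolding L_def using av_lead_coeff_mult_power_gt_one[OF \<rho>T] .
  have expand: "L * av (w - x0) \<le> av (f w - x0)" if w: "T \<le> av (w - x0)" for w
  proof -
    have "av (\<gamma> i - x0) < av (w - x0)" if "i \<in> {..<d}" for i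
      using \<gamma>T that w by force
    then have "av (f w - x0) = av (w - x0) * (av a * av (w - x0) ^ (d - 1))"
      using av_image_diff[OF \<gamma>] av_prod_diff_eq_of_less[of "{..<d}" \<gamma> x0 w]
        av_lead_coeff_mult_power_eq by simp
    moreover have "T ^ (d - 1) \<le> av (w - x0) ^ (d - 1)"
      using w T by (intro power_mono) auto
    then have "L \<le> av a * av (w - x0) ^ (d - 1)"
      unfolding L_def using av_lead_coeff_pos by simp
    ultimately show ?thesis
      by (metis av_nonneg mult.commute mult_right_mono)
  qed
  have "av (z - x0) < T" if "z \<in> J" for z
  proof (rule ccontr)
    assume "\<not> av (z - x0) < T"
    then have z: "T \<le> av (z - x0)" by simp
    obtain B where B: "\<And>n. av ((f ^^ n) z - x0) \<le> B"
      using \<open>z \<in> J\<close> filled_julia_iff_orbit_bounded by blast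
    obtain n where n: "B / T < L ^ n"
      using real_arch_pow[OF L] by blast
    have "L ^ n * T \<le> L ^ n * av (z - x0)"
      using z L by simp
    also have "\<dots> \<le> av ((f ^^ n) z - x0)"
      by (rule iterate_expanding_lower_bound[of T "\<lambda>w. av (w - x0)" L f]) (use expand L T z in auto)
    also have "\<dots> \<le> B"
      by (rule B)
    finally show False
      using n T by (simp add: field_simps)
  qed
  then show ?thesis by blast
qed

lemma julia_diam_bdd: "bdd_above {av (x - y) | x y. x \<in> J \<and> y \<in> J}"
proof -
  obtain x0 where x0: "x0 \<in> J"
    using filled_julia_nonempty by blast
  obtain T where T: "\<forall>z\<in>J. av (z - x0) < T"
    using filled_julia_bounded[OF x0] by blast
  have "av (x - y) \<le> T" if "x \<in> J" "y \<in> J" for x y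
  proof -
    have "av (x - x0) < T" "av (x0 - y) < T"
      using T that av_diff_commute[of x0 y] by auto
    then show ?thesis
      using av_diff_triangle[of x y x0] by simp
  qed
  then show ?thesis
    unfolding bdd_above_def by blast
qed

lemma av_diff_le_julia_diam: "x \<in> J \<Longrightarrow> y \<in> J \<Longrightarrow> av (x - y) \<le> r"
  unfolding julia_diam_def using julia_diam_bdd by (intro cSup_upper) auto

lemma julia_diam_le: "(\<And>x y. x \<in> J \<Longrightarrow> y \<in> J \<Longrightarrow> av (x - y) \<le> s) \<Longrightarrow> r \<le> s"
  unfolding julia_diam_def using filled_julia_nonempty by (intro cSup_least) auto

lemma julia_diam_le_of_subset_cdisk: "J \<subseteq> cdisk av c s \<Longrightarrow> r \<le> s"
  using cdisk_diff_le by (intro julia_diam_le) blast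

lemma exists_av_diff_gt: "e < r \<Longrightarrow> \<exists>x\<in>J. \<exists>y\<in>J. e < av (x - y)"
  using julia_diam_le[of e] by force

lemma av_image_diff_eq_of_far:
  assumes x0: "x0 \<in> J" and z: "r < av (z - x0)"
  shows "av (f z - x0) = av a * av (z - x0) ^ d"
proof -
  obtain \<gamma> where \<gamma>: "lists_preimages x0 \<gamma>"
    using exists_lists_preimages by blast
  have "av (\<gamma> i - x0) < av (z - x0)" if "i < d" for i
    using av_diff_le_julia_diam[OF preimage_in_filled_julia[OF x0 \<gamma> that] x0] z by simp
  then show ?thesis
    using av_image_diff[OF \<gamma>] av_prod_diff_eq_of_less[of "{..<d}" \<gamma> x0 z] by simp
qed

lemma cdisk_rho_subset_filled_julia:
  assumes x0: "x0 \<in> J" and r\<rho>: "r \<le> \<rho>"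
  shows "cdisk av x0 \<rho> \<subseteq> J"
proof
  obtain \<gamma> where \<gamma>: "lists_preimages x0 \<gamma>"
    using exists_lists_preimages by blast
  have into: "av (f w - x0) \<le> \<rho>" if w: "av (w - x0) \<le> \<rho>" for w
  proof -
    have "av (w - \<gamma> i) \<le> \<rho>" if "i < d" for i
      using av_diff_le_julia_diam[OF x0 preimage_in_filled_julia[OF x0 \<gamma> that]]
        av_diff_triangle[of w "\<gamma> i" x0] w r\<rho> by simp
    then have "av a * (\<Prod>i<d. av (w - \<gamma> i)) \<le> av a * \<rho> ^ d"
      using av_lead_coeff_pos prod_mono[of "{..<d}" "\<lambda>i. av (w - \<gamma> i)" "\<lambda>_. \<rho>"] by simp
    then show ?thesis
      using av_image_diff[OF \<gamma>] av_lead_coeff_mult_rho_power_d by (simp add: av_prod)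
  qed
  fix z assume "z \<in> cdisk av x0 \<rho>"
  then have "av ((f ^^ n) z - x0) \<le> \<rho>" for n
    unfolding cdisk_def by (induction n) (simp_all add: into)
  then show "z \<in> J"
    using filled_julia_iff_orbit_bounded by blast
qed

lemma rho_le_julia_diam: "\<rho> \<le> r"
proof (rule ccontr)
  assume "\<not> \<rho> \<le> r"
  obtain x0 where x0: "x0 \<in> J"
    using filled_julia_nonempty by blast
  obtain c where c: "av c = \<rho>"
    using exists_av_eq_rho by blast
  have "x0 + c \<in> J"
    using cdisk_rho_subset_filled_julia[OF x0] \<open>\<not> \<rho> \<le> r\<close> c unfolding cdisk_def by auto
  then show False
    using av_diff_le_julia_diam[OF _ x0, of "x0 + c"] c \<open>\<not> \<rho> \<le> r\<close> by simp
qed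

lemma julia_diam_pos: "0 < r"
  using rho_le_julia_diam rho_pos by simp

lemma U0_eq_cdisk:
  assumes x0: "x0 \<in> J"
  shows "U0 av \<phi> = cdisk av x0 r"
proof
  have "J \<subseteq> cdisk av x0 r"
    using av_diff_le_julia_diam[OF _ x0] unfolding cdisk_def by blast
  then show "U0 av \<phi> \<subseteq> cdisk av x0 r"
    unfolding U0_def using julia_diam_pos by blast
next
  have "cdisk av x0 r \<subseteq> cdisk av c s" if J: "J \<subseteq> cdisk av c s" for c s
  proof
    fix w assume "w \<in> cdisk av x0 r"
    then show "w \<in> cdisk av c s"
      using julia_diam_le_of_subset_cdisk[OF J] J x0 av_diff_triangle[of w c x0]
      unfolding cdisk_def by fastforce
  qed
  then show "cdisk av x0 r \<subseteq> U0 av \<phi>"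
    unfolding U0_def by blast
qed

lemma filled_julia_subset_U0: "J \<subseteq> U0 av \<phi>"
  unfolding U0_def by blast

lemma av_diff_le_julia_diam_U0: "x \<in> U0 av \<phi> \<Longrightarrow> y \<in> U0 av \<phi> \<Longrightarrow> av (x - y) \<le> r"
  using U0_eq_cdisk cdisk_diff_le filled_julia_nonempty by metis

lemma exists_escape_radius:
  assumes "\<rho> < r"
  shows "\<exists>e<r. \<forall>t>e. r < av a * t ^ d"
proof -
  define e where "e = root d (r / av a)"
  have e0: "0 \<le> e"
    unfolding e_def using julia_diam_pos av_lead_coeff_pos by (simp add: real_root_ge_zero)
  have ed: "av a * e ^ d = r"
    unfolding e_def using two_le_d julia_diam_pos av_lead_coeff_pos by simp
  have "av a * e ^ d < r * (av a * r ^ (d - 1))"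
    using ed av_lead_coeff_mult_power_gt_one[OF assms] julia_diam_pos by simp
  then have "av a * e ^ d < av a * r ^ d"
    unfolding av_lead_coeff_mult_power_eq[of r] .
  then have "e ^ d < r ^ d"
    using av_lead_coeff_pos by simp
  then have "e < r"
    using julia_diam_pos by (meson power_less_imp_less_base less_imp_le)
  moreover have "r < av a * t ^ d" if "e < t" for t
    using ed power_strict_mono[OF that e0, of d] two_le_d av_lead_coeff_pos
    by (metis mult_strict_left_mono not_numeral_le_zero zero_less_iff_neq_zero)
  ultimately show ?thesis by blast
qed

lemma U0_not_forward_invariant:
  assumes "\<rho> < r"
  shows "\<exists>z\<in>U0 av \<phi>. f z \<notin> U0 av \<phi>"
proof -
  obtain x0 where x0: "x0 \<in> J"
    using filled_julia_nonempty by blast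
  obtain \<gamma> where \<gamma>: "lists_preimages x0 \<gamma>"
    using exists_lists_preimages by blast
  obtain e where "e < r" and e: "\<And>t. e < t \<Longrightarrow> r < av a * t ^ d"
    using exists_escape_radius[OF assms] by blast
  then obtain y y' where yy: "y \<in> J" "y' \<in> J" "e < av (y - y')"
    using exists_av_diff_gt by blast
  obtain z where "(\<Prod>i<d. z - \<gamma> i) = (y - y') ^ d"
    using alg_closed_prod_linear_eq[OF alg_closed] two_le_d by fastforce
  then have fz: "av (f z - x0) = av a * av (y - y') ^ d"
    using av_image_diff[OF \<gamma>] by (simp add: av_power)
  have "av (z - x0) \<le> r"
  proof (rule ccontr)
    assume "\<not> av (z - x0) \<le> r"
    then have "av (y - y') ^ d < av (z - x0) ^ d"
      using av_diff_le_julia_diam[OF yy(1,2)] two_le_d by (intro power_strict_mono) auto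
    then show False
      using fz av_image_diff_eq_of_far[OF x0] \<open>\<not> av (z - x0) \<le> r\<close> av_lead_coeff_pos by simp
  qed
  moreover have "r < av (f z - x0)"
    using fz e[OF yy(3)] by simp
  ultimately show ?thesis
    using U0_eq_cdisk[OF x0] unfolding cdisk_def by auto
qed

lemma filled_julia_eq_U0_iff: "J = U0 av \<phi> \<longleftrightarrow> r = \<rho>"
proof
  assume J: "J = U0 av \<phi>"
  show "r = \<rho>"
  proof (rule ccontr)
    assume "r \<noteq> \<rho>"
    then obtain z where "z \<in> U0 av \<phi>" "f z \<notin> U0 av \<phi>"
      using U0_not_forward_invariant rho_le_julia_diam by force
    then show False
      using J filled_julia_image_iff by blast
  qed
next
  assume "r = \<rho>"
  obtain x0 where x0: "x0 \<in> J"
    using filled_julia_nonempty by blast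
  show "J = U0 av \<phi>"
    using filled_julia_subset_U0 cdisk_rho_subset_filled_julia[OF x0] U0_eq_cdisk[OF x0] \<open>r = \<rho>\<close>
    by auto
qed

text \<open>If \<open>y\<close> were farther than \<open>\<rho>\<close> from every \<open>\<beta>\<^sub>i\<close>, then
  \<open>|f(y) - \<alpha>| \<le> r\<close> forces the largest distance \<open>M = |y - \<beta>\<^sub>j|\<close> below \<open>r\<close>,
  and every point of \<open>J\<close> farther from \<open>y\<close> than \<open>M\<close> and the escape radius would be
  mapped too far from \<open>\<alpha>\<close>; so \<open>J\<close> would fit in a disk of radius \<open>< r\<close>.\<close>
lemma filled_julia_near_preimages:
  assumes "\<rho> < r" and \<alpha>: "\<alpha> \<in> U0 av \<phi>" and \<beta>: "lists_preimages \<alpha> \<beta>" and y: "y \<in> J"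
  shows "\<exists>i<d. av (y - \<beta> i) \<le> \<rho>"
proof (rule ccontr)
  assume "\<not> ?thesis"
  then have far: "\<And>i. i < d \<Longrightarrow> \<rho> < av (y - \<beta> i)" by auto
  have near_\<alpha>: "av (f z - \<alpha>) \<le> r" if "z \<in> J" for z
    using av_diff_le_julia_diam_U0 \<alpha> filled_julia_subset_U0 filled_julia_image_iff that by blast
  define M where "M = Max ((\<lambda>i. av (y - \<beta> i)) ` {..<d})"
  have fin: "finite ((\<lambda>i. av (y - \<beta> i)) ` {..<d})"
    by simp
  have "(\<lambda>i. av (y - \<beta> i)) ` {..<d} \<noteq> {}"
    using two_le_d by (auto simp: lessThan_empty_iff)
  then have "M \<in> (\<lambda>i. av (y - \<beta> i)) ` {..<d}"
    using Max_in[OF fin] unfolding M_def by blast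
  then obtain j where j: "j < d" and M: "M = av (y - \<beta> j)"
    by blast
  have max: "av (y - \<beta> i) \<le> M" if "i < d" for i
    using Max_ge[OF fin] that unfolding M_def by simp
  have "M = av a * (M * \<rho> ^ (d - 1))"
    using av_lead_coeff_mult_rho_power by (simp add: algebra_simps)
  also have "\<dots> < av a * (\<Prod>i<d. av (y - \<beta> i))"
    unfolding M using prod_gt_factor_mult_power[OF j two_le_d, of \<rho> "\<lambda>i. av (y - \<beta> i)"]
      far rho_pos av_lead_coeff_pos by simp
  also have "\<dots> \<le> r"
    using near_\<alpha>[OF y] av_image_diff[OF \<beta>] by (simp add: av_prod)
  finally have "M < r" .
  obtain e where "e < r" and e: "\<And>t. e < t \<Longrightarrow> r < av a * t ^ d"
    using exists_escape_radius[OF \<open>\<rho> < r\<close>] by blast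
  have "J \<subseteq> cdisk av y (max M e)"
  proof
    fix z assume z: "z \<in> J"
    show "z \<in> cdisk av y (max M e)"
    proof (rule ccontr)
      assume "z \<notin> cdisk av y (max M e)"
      then have zy: "max M e < av (z - y)"
        unfolding cdisk_def by (simp add: not_le del: max_less_iff_conj)
      then have "av (\<beta> i - y) < av (z - y)" if "i < d" for i
        using max[OF that] av_diff_commute[of y "\<beta> i"] by simp
      then have "av (f z - \<alpha>) = av a * av (z - y) ^ d"
        using av_image_diff[OF \<beta>] av_prod_diff_eq_of_less[of "{..<d}" \<beta> y z] by simp
      then show False
        using near_\<alpha>[OF z] e[of "av (z - y)"] zy by simp
    qed
  qed
  then show False
    using julia_diam_le_of_subset_cdisk \<open>M < r\<close> \<open>e < r\<close> by fastforce
qed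

lemma julia_diam_eq_preimage_dist:
  assumes "\<rho> < r" and \<alpha>: "\<alpha> \<in> U0 av \<phi>" and \<beta>: "lists_preimages \<alpha> \<beta>"
  shows "\<exists>i<d. \<exists>j<d. av (\<beta> i - \<beta> j) = r"
proof -
  define F where "F = (\<lambda>(i, j). av (\<beta> i - \<beta> j)) ` ({..<d} \<times> {..<d})"
  define m where "m = Max (insert \<rho> {v\<in>F. v < r})"
  have fin: "finite (insert \<rho> {v\<in>F. v < r})"
    unfolding F_def by simp
  have "m < r" "\<rho> \<le> m"
    using Max_in[OF fin] Max_ge[OF fin] assms unfolding m_def by auto
  then obtain x x' where xx: "x \<in> J" "x' \<in> J" "m < av (x - x')"
    using exists_av_diff_gt by blast
  obtain i j where ij: "i < d" "j < d" "av (x - \<beta> i) \<le> \<rho>" "av (x' - \<beta> j) \<le> \<rho>"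
    using filled_julia_near_preimages[OF assms] xx by metis
  have eq: "av (\<beta> i - \<beta> j) = av (x - x')"
    using av_diff_eq_of_close[of m x x' "\<beta> i" "\<beta> j"] xx ij \<open>\<rho> \<le> m\<close> by simp
  then have "av (x - x') \<in> F"
    unfolding F_def using ij by force
  then have "\<not> av (x - x') < r"
    using Max_ge[OF fin] xx(3) unfolding m_def by fastforce
  then show ?thesis
    using eq ij av_diff_le_julia_diam[OF xx(1,2)] by fastforce
qed

lemma exists_av_eq_julia_diam: "\<exists>x. av x = r"
proof (cases "r = \<rho>")
  case True
  then show ?thesis using exists_av_eq_rho by simp
next
  case False
  then have "\<rho> < r" using rho_le_julia_diam by simp
  obtain x0 where x0: "x0 \<in> J"
    using filled_julia_nonempty by blast
  obtain \<beta> where "lists_preimages x0 \<beta>"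
    using exists_lists_preimages by blast
  then show ?thesis
    using julia_diam_eq_preimage_dist[OF \<open>\<rho> < r\<close>] filled_julia_subset_U0 x0 by blast
qed

end

theorem lemma3p4:
  fixes K :: "'a::field set" and av :: "'a \<Rightarrow> real" and \<phi> :: "'a poly" and d :: nat
  assumes Cv: "is_Cv K av"
    and coeffs: "\<forall>i. coeff \<phi> i \<in> K"
    and deg: "degree \<phi> = d" and d2: "d \<ge> 2"
  shows "(\<forall>x\<in>filled_julia av \<phi>. U0 av \<phi> = cdisk av x (julia_diam av \<phi>))
    \<and> (\<exists>x. av x = julia_diam av \<phi>)
    \<and> julia_diam av \<phi> \<ge> av (lead_coeff \<phi>) powr (-1 / (real d - 1))
    \<and> (julia_diam av \<phi> = av (lead_coeff \<phi>) powr (-1 / (real d - 1))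
         \<longleftrightarrow> filled_julia av \<phi> = U0 av \<phi>)
    \<and> (julia_diam av \<phi> > av (lead_coeff \<phi>) powr (-1 / (real d - 1)) \<longrightarrow>
        (\<forall>\<alpha> \<in> U0 av \<phi>. \<forall>\<beta> :: nat \<Rightarrow> 'a.
           \<phi> - [:\<alpha>:] = smult (lead_coeff \<phi>) (\<Prod>i<d. [:- \<beta> i, 1:]) \<longrightarrow>
           filled_julia av \<phi> \<subseteq>
             (\<Union>i<d. cdisk av (\<beta> i) (av (lead_coeff \<phi>) powr (-1 / (real d - 1))))))"
proof -
  interpret nonarch_poly_dynamics av \<phi> d
    using Cv deg d2 by unfold_locales (auto simp: is_Cv_def)
  have cover: "J \<subseteq> (\<Union>i<d. cdisk av (\<beta> i) \<rho>)"
    if "\<rho> < r" "\<alpha> \<in> U0 av \<phi>" "\<phi> - [:\<alpha>:] = smult a (\<Prod>i<d. [:- \<beta> i, 1:])" for \<alpha> \<beta>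
    using filled_julia_near_preimages[OF that(1,2) lists_preimagesI[OF that(3)]]
    unfolding cdisk_def by blast
  show ?thesis
    unfolding \<rho>_def[symmetric]
    using U0_eq_cdisk exists_av_eq_julia_diam rho_le_julia_diam filled_julia_eq_U0_iff cover
    by blast
qed

end
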